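(* For any $\beta_0\in(0,\pi)$ there exists a finite point set $P$ in the plane such that $\max_{\beta\in(0,\pi)}\operatorname{area}(\mathcal{O}_\beta\mathcal{H}(P))\neq\operatorname{area}(\mathcal{O}_{\beta_0}\mathcal{H}(P))$.
   Context: For $\beta\in(0,\pi)$, $\mathcal{O}_\beta$ is the pair of lines through the origin with slopes $0$ and $\tan\beta$. Given an apex $a$, every point is uniquely $a+s(1,0)+t(\cos\beta,\sin\beta)$; an $\mathcal{O}_\beta$-quadrant with apex $a$ is one of the four open sets of such points with $s>0,t>0$; $s<0,t>0$; $s>0,t<0$; or $s<0,t<0$. A quadrant is $P$-free if it contains no point of $P$, and the $\mathcal{O}_\beta$-hull $\mathcal{O}_\beta\mathcal{H}(P)$ is the plane minus the union of all $P$-free $\mathcal{O}_\beta$-quadrants. $\operatorname{area}$ denotes Lebesgue measure. *)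

theory Defs
  imports "HOL-Analysis.Analysis"
begin

definition obeta_quadrant :: "real \<Rightarrow> real \<times> real \<Rightarrow> real \<Rightarrow> real \<Rightarrow> (real \<times> real) set" where
  "obeta_quadrant \<beta> a e1 e2 =
     {a + (s, 0) + (t * cos \<beta>, t * sin \<beta>) | s t. e1 * s > 0 \<and> e2 * t > 0}"

definition obeta_quadrants :: "real \<Rightarrow> (real \<times> real) set set" where
  "obeta_quadrants \<beta> =
     {obeta_quadrant \<beta> a e1 e2 | a e1 e2. e1 \<in> {1, -1} \<and> e2 \<in> {1, -1}}"

definition obeta_hull :: "real \<Rightarrow> (real \<times> real) set \<Rightarrow> (real \<times> real) set" where
  "obeta_hull \<beta> P = UNIV - \<Union>{Q \<in> obeta_quadrants \<beta>. Q \<inter> P = {}}"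

definition area :: "(real \<times> real) set \<Rightarrow> real" where
  "area S = measure lebesgue S"

end

theory Submission
  imports Defs
begin

text \<open>In oblique coordinates (s, t) with respect to the basis (1, 0), (cos \<beta>, sin \<beta>), the
O_\<beta>-quadrants are the open coordinate quadrants, so a point off the coordinate lines through P
lies in the O_\<beta>-hull exactly when each of its four open quadrants contains a point of P; this
condition is open, and for finite P the hull is bounded. Take
P = {(1, 3/2), (-1, 3/2), u, -u} with u = (cos \<beta>0, sin \<beta>0). For \<beta> = \<beta>0 the first two points share
their t-coordinate and the last two their s-coordinate, so no point has all four quadrants
occupied and the hull lies in finitely many lines, hence has area 0. For \<beta> = pi/2 (or pi/4 if
\<beta>0 = pi/2) some point has all four quadrants occupied, so that hull has an interior point and
positive area, and the supremum over \<beta> is positive.\<close>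

definition obeta_t :: "real \<Rightarrow> real \<times> real \<Rightarrow> real" where
  "obeta_t \<beta> z = snd z / sin \<beta>"

definition obeta_s :: "real \<Rightarrow> real \<times> real \<Rightarrow> real" where
  "obeta_s \<beta> z = fst z - obeta_t \<beta> z * cos \<beta>"

definition obeta_point :: "real \<Rightarrow> real \<Rightarrow> real \<Rightarrow> real \<times> real" where
  "obeta_point \<beta> s t = (s + t * cos \<beta>, t * sin \<beta>)"

lemma obeta_s_point [simp]: "sin \<beta> \<noteq> 0 \<Longrightarrow> obeta_s \<beta> (obeta_point \<beta> s t) = s"
  and obeta_t_point [simp]: "sin \<beta> \<noteq> 0 \<Longrightarrow> obeta_t \<beta> (obeta_point \<beta> s t) = t"
  by (simp_all add: obeta_s_def obeta_t_def obeta_point_def)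

lemma obeta_s_diff [simp]: "obeta_s \<beta> (x - y) = obeta_s \<beta> x - obeta_s \<beta> y"
  and obeta_t_diff [simp]: "obeta_t \<beta> (x - y) = obeta_t \<beta> x - obeta_t \<beta> y"
  by (simp_all add: obeta_s_def obeta_t_def diff_divide_distrib algebra_simps)

lemma fst_eq_obeta: "fst z = obeta_s \<beta> z + obeta_t \<beta> z * cos \<beta>"
  by (simp add: obeta_s_def)

lemma snd_eq_obeta: "sin \<beta> \<noteq> 0 \<Longrightarrow> snd z = obeta_t \<beta> z * sin \<beta>"
  by (simp add: obeta_t_def)

lemma mem_obeta_quadrant_iff:
  assumes "sin \<beta> \<noteq> 0"
  shows "z \<in> obeta_quadrant \<beta> a e1 e2 \<longleftrightarrow>
         e1 * (obeta_s \<beta> z - obeta_s \<beta> a) > 0 \<and> e2 * (obeta_t \<beta> z - obeta_t \<beta> a) > 0"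
proof -
  have "z \<in> obeta_quadrant \<beta> a e1 e2 \<longleftrightarrow> (\<exists>s t. z - a = obeta_point \<beta> s t \<and> e1 * s > 0 \<and> e2 * t > 0)"
    by (auto simp: obeta_quadrant_def obeta_point_def algebra_simps)
  also have "\<dots> \<longleftrightarrow> e1 * obeta_s \<beta> (z - a) > 0 \<and> e2 * obeta_t \<beta> (z - a) > 0"
  proof -
    have "w = obeta_point \<beta> s t \<longleftrightarrow> obeta_s \<beta> w = s \<and> obeta_t \<beta> w = t" for w s t
      using assms by (auto simp: obeta_point_def obeta_s_def obeta_t_def prod_eq_iff)
    then show ?thesis by auto
  qed
  finally show ?thesis by simp
qed

lemma mem_obeta_quadrant_swap:
  "sin \<beta> \<noteq> 0 \<Longrightarrow> p \<in> obeta_quadrant \<beta> x e1 e2 \<longleftrightarrow> x \<in> obeta_quadrant \<beta> p (- e1) (- e2)"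
  by (simp add: mem_obeta_quadrant_iff algebra_simps)

lemma obeta_quadrant_subset:
  assumes "sin \<beta> \<noteq> 0" and "x \<in> obeta_quadrant \<beta> a e1 e2"
  shows "obeta_quadrant \<beta> x e1 e2 \<subseteq> obeta_quadrant \<beta> a e1 e2"
  using assms by (auto simp: mem_obeta_quadrant_iff right_diff_distrib)

lemma open_obeta_quadrant:
  assumes "sin \<beta> \<noteq> 0"
  shows "open (obeta_quadrant \<beta> a e1 e2)"
proof -
  have "obeta_quadrant \<beta> a e1 e2 =
      {z. 0 < e1 * (obeta_s \<beta> z - obeta_s \<beta> a)} \<inter> {z. 0 < e2 * (obeta_t \<beta> z - obeta_t \<beta> a)}"
    using assms by (auto simp: mem_obeta_quadrant_iff)
  then show ?thesis
    unfolding obeta_s_def obeta_t_def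
    by (simp only:) (intro open_Int open_Collect_less continuous_intros; simp add: assms)
qed

lemma closed_obeta_hull: "sin \<beta> \<noteq> 0 \<Longrightarrow> closed (obeta_hull \<beta> P)"
  unfolding obeta_hull_def
  by (intro closed_Diff closed_UNIV open_Union) (auto simp: obeta_quadrants_def open_obeta_quadrant)

lemma obeta_quadrant_in_obeta_quadrants:
  "e1 \<in> {1, -1} \<Longrightarrow> e2 \<in> {1, -1} \<Longrightarrow> obeta_quadrant \<beta> a e1 e2 \<in> obeta_quadrants \<beta>"
  unfolding obeta_quadrants_def by blast

definition quadrants_occupied :: "real \<Rightarrow> (real \<times> real) set \<Rightarrow> real \<times> real \<Rightarrow> bool" where
  "quadrants_occupied \<beta> P x \<longleftrightarrow>
     (\<forall>e1\<in>{1, -1}. \<forall>e2\<in>{1, -1}. obeta_quadrant \<beta> x e1 e2 \<inter> P \<noteq> {})"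

lemma quadrants_occupied_iff:
  assumes "sin \<beta> \<noteq> 0"
  shows "quadrants_occupied \<beta> P x \<longleftrightarrow> (\<forall>e1\<in>{1, -1}. \<forall>e2\<in>{1, -1}. \<exists>p\<in>P.
           e1 * (obeta_s \<beta> p - obeta_s \<beta> x) > 0 \<and> e2 * (obeta_t \<beta> p - obeta_t \<beta> x) > 0)"
  by (auto simp: quadrants_occupied_def mem_obeta_quadrant_iff[OF assms])

lemma quadrants_occupied_iff_snd:
  assumes "sin \<beta> > 0"
  shows "quadrants_occupied \<beta> P x \<longleftrightarrow> (\<forall>e1\<in>{1, -1}. \<forall>e2\<in>{1, -1}. \<exists>p\<in>P.
           e1 * (obeta_s \<beta> p - obeta_s \<beta> x) > 0 \<and> e2 * (snd p - snd x) > 0)"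
proof -
  have "e * (obeta_t \<beta> p - obeta_t \<beta> x) = e * (snd p - snd x) / sin \<beta>" for e p
    unfolding obeta_t_def by (simp add: diff_divide_distrib right_diff_distrib)
  then show ?thesis
    using assms by (simp add: quadrants_occupied_iff zero_less_divide_iff)
qed

lemma quadrants_occupied_imp_mem_obeta_hull:
  assumes "sin \<beta> \<noteq> 0" and "quadrants_occupied \<beta> P x"
  shows "x \<in> obeta_hull \<beta> P"
proof -
  have "Q \<inter> P \<noteq> {}" if Q: "Q \<in> obeta_quadrants \<beta>" and xQ: "x \<in> Q" for Q
  proof -
    obtain a e1 e2 where Q: "Q = obeta_quadrant \<beta> a e1 e2" and e: "e1 \<in> {1, -1}" "e2 \<in> {1, -1}"
      using Q unfolding obeta_quadrants_def by blast
    have "obeta_quadrant \<beta> x e1 e2 \<subseteq> Q"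
      using obeta_quadrant_subset[OF assms(1)] xQ Q by blast
    with assms(2) e show ?thesis unfolding quadrants_occupied_def by blast
  qed
  then show ?thesis unfolding obeta_hull_def by blast
qed

lemma open_quadrants_occupied:
  assumes "sin \<beta> \<noteq> 0"
  shows "open {x. quadrants_occupied \<beta> P x}"
proof -
  have "{x. quadrants_occupied \<beta> P x} =
      (\<Inter>e1\<in>{1, -1}. \<Inter>e2\<in>{1, -1}. \<Union>p\<in>P. obeta_quadrant \<beta> p (- e1) (- e2))"
  proof (rule set_eqI)
    fix x
    show "x \<in> {x. quadrants_occupied \<beta> P x} \<longleftrightarrow>
        x \<in> (\<Inter>e1\<in>{1, -1}. \<Inter>e2\<in>{1, -1}. \<Union>p\<in>P. obeta_quadrant \<beta> p (- e1) (- e2))"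
      by (auto simp: quadrants_occupied_def mem_obeta_quadrant_swap[OF assms, of x])
  qed
  then show ?thesis
    by (simp add: open_Int open_UN open_obeta_quadrant assms)
qed

lemma notin_obeta_hullI:
  assumes s: "sin \<beta> \<noteq> 0" and e: "e1 \<in> {1, -1}" "e2 \<in> {1, -1}" and "d > 0"
    and far: "\<And>p. p \<in> P \<Longrightarrow>
      \<not> (e1 * (obeta_s \<beta> p - obeta_s \<beta> x) > - d \<and> e2 * (obeta_t \<beta> p - obeta_t \<beta> x) > - d)"
  shows "x \<notin> obeta_hull \<beta> P"
proof -
  define Q where "Q = obeta_quadrant \<beta> (x - obeta_point \<beta> (e1 * d) (e2 * d)) e1 e2"
  have sq: "e1 * e1 = 1" "e2 * e2 = 1" using e by auto
  have "x \<in> Q"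
    using s sq \<open>d > 0\<close> by (simp add: Q_def mem_obeta_quadrant_iff algebra_simps)
  moreover have "Q \<inter> P = {}"
    using s sq far by (force simp: Q_def mem_obeta_quadrant_iff algebra_simps)
  ultimately show ?thesis
    using obeta_quadrant_in_obeta_quadrants[OF e] unfolding obeta_hull_def Q_def by blast
qed

lemma neg_le_mult_of_le_one:
  fixes v d k :: real
  assumes "v > - d" "d > 0" "0 \<le> k" "k \<le> 1"
  shows "- d \<le> v * k"
proof (cases "v \<ge> 0")
  case True
  then have "0 \<le> v * k" using assms(3) by simp
  then show ?thesis using assms(2) by linarith
next
  case False
  then have "v \<le> v * k" using mult_left_mono_neg[OF assms(4), of v] by simp
  then show ?thesis using assms(1) by linarith
qed

text \<open>With c the sign of cos \<beta>, every O_\<beta>-quadrant of sign pattern (e, e c) lies on the side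
e * fst z > e * fst a of its apex a; this yields a P-free quadrant around any x with |fst x| > R.\<close>

lemma abs_fst_le_if_mem_obeta_hull:
  assumes "0 < \<beta>" "\<beta> < pi" and x: "x \<in> obeta_hull \<beta> P" and R: "\<And>p. p \<in> P \<Longrightarrow> \<bar>fst p\<bar> \<le> R"
  shows "\<bar>fst x\<bar> \<le> R"
proof (rule ccontr)
  assume far: "\<not> \<bar>fst x\<bar> \<le> R"
  define e :: real where "e = (if fst x \<ge> 0 then 1 else -1)"
  define c :: real where "c = (if cos \<beta> \<ge> 0 then 1 else -1)"
  define d where "d = (\<bar>fst x\<bar> - R) / 2"
  have e: "e \<in> {1, -1}" "e * fst x = \<bar>fst x\<bar>" by (auto simp: e_def)
  have c: "c * cos \<beta> = \<bar>cos \<beta>\<bar>" "c * (c * y) = y" for y by (auto simp: c_def)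
  have "e * c \<in> {1, -1}" by (auto simp: e_def c_def)
  have "d > 0" using far by (simp add: d_def)
  have "x \<notin> obeta_hull \<beta> P"
  proof (rule notin_obeta_hullI[OF _ e(1) \<open>e * c \<in> {1, -1}\<close> \<open>d > 0\<close>])
    show "sin \<beta> \<noteq> 0" using sin_gt_zero[OF assms(1,2)] by simp
    fix p assume p: "p \<in> P"
    show "\<not> (e * (obeta_s \<beta> p - obeta_s \<beta> x) > - d \<and> e * c * (obeta_t \<beta> p - obeta_t \<beta> x) > - d)"
    proof
      assume near: "e * (obeta_s \<beta> p - obeta_s \<beta> x) > - d \<and> e * c * (obeta_t \<beta> p - obeta_t \<beta> x) > - d"
      have "e * (fst p - fst x) =
          e * (obeta_s \<beta> p - obeta_s \<beta> x) + e * c * (obeta_t \<beta> p - obeta_t \<beta> x) * (c * cos \<beta>)"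
        using fst_eq_obeta[of p \<beta>] fst_eq_obeta[of x \<beta>] by (simp add: algebra_simps c(2))
      moreover have "e * c * (obeta_t \<beta> p - obeta_t \<beta> x) * (c * cos \<beta>) \<ge> - d"
        using near \<open>d > 0\<close> by (intro neg_le_mult_of_le_one) (auto simp: c(1))
      ultimately have "e * (fst p - fst x) > - 2 * d"
        using near by linarith
      then have "e * fst p > R"
        using e(2) by (simp add: d_def right_diff_distrib)
      moreover have "e * fst p \<le> \<bar>fst p\<bar>" using e(1) by auto
      ultimately show False using R[OF p] by linarith
    qed
  qed
  with x show False by blast
qed

lemma abs_snd_le_if_mem_obeta_hull:
  assumes "0 < \<beta>" "\<beta> < pi" and x: "x \<in> obeta_hull \<beta> P" and R: "\<And>p. p \<in> P \<Longrightarrow> \<bar>snd p\<bar> \<le> R"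
  shows "\<bar>snd x\<bar> \<le> R"
proof (rule ccontr)
  assume far: "\<not> \<bar>snd x\<bar> \<le> R"
  define e :: real where "e = (if snd x \<ge> 0 then 1 else -1)"
  define d where "d = (\<bar>snd x\<bar> - R) / 2"
  have e: "e \<in> {1, -1}" "e * snd x = \<bar>snd x\<bar>" by (auto simp: e_def)
  have sin: "0 < sin \<beta>" "sin \<beta> \<le> 1" using sin_gt_zero[OF assms(1,2)] by simp_all
  have "d > 0" using far by (simp add: d_def)
  have "x \<notin> obeta_hull \<beta> P"
  proof (rule notin_obeta_hullI[of \<beta> 1 e d])
    fix p assume p: "p \<in> P"
    show "\<not> (1 * (obeta_s \<beta> p - obeta_s \<beta> x) > - d \<and> e * (obeta_t \<beta> p - obeta_t \<beta> x) > - d)"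
    proof
      assume near: "1 * (obeta_s \<beta> p - obeta_s \<beta> x) > - d \<and> e * (obeta_t \<beta> p - obeta_t \<beta> x) > - d"
      have "e * (snd p - snd x) = e * (obeta_t \<beta> p - obeta_t \<beta> x) * sin \<beta>"
        using snd_eq_obeta[of \<beta> p] snd_eq_obeta[of \<beta> x] sin by (simp add: algebra_simps)
      moreover have "e * (obeta_t \<beta> p - obeta_t \<beta> x) * sin \<beta> \<ge> - d"
        using near \<open>d > 0\<close> sin by (intro neg_le_mult_of_le_one) auto
      ultimately have "e * snd p - \<bar>snd x\<bar> \<ge> - d"
        using e(2) by (simp add: right_diff_distrib)
      then have "e * snd p > R"
        using far by (simp add: d_def field_simps)
      moreover have "e * snd p \<le> \<bar>snd p\<bar>" using e(1) by auto
      ultimately show False using R[OF p] by linarith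
    qed
  qed (use e(1) \<open>d > 0\<close> sin in auto)
  with x show False by blast
qed

lemma obeta_hull_subset_cbox:
  assumes "0 < \<beta>" "\<beta> < pi" and R: "\<And>p. p \<in> P \<Longrightarrow> \<bar>fst p\<bar> \<le> R \<and> \<bar>snd p\<bar> \<le> R"
  shows "obeta_hull \<beta> P \<subseteq> cbox (-R, -R) (R, R)"
proof
  fix x assume "x \<in> obeta_hull \<beta> P"
  then have "\<bar>fst x\<bar> \<le> R" "\<bar>snd x\<bar> \<le> R"
    using abs_fst_le_if_mem_obeta_hull[OF assms(1,2)] abs_snd_le_if_mem_obeta_hull[OF assms(1,2)] R
    by blast+
  then show "x \<in> cbox (-R, -R) (R, R)"
    by (cases x) (simp add: cbox_Pair_iff abs_le_iff)
qed

lemma finite_imp_bounded_coords: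
  fixes P :: "(real \<times> real) set"
  assumes "finite P"
  obtains R where "\<And>p. p \<in> P \<Longrightarrow> \<bar>fst p\<bar> \<le> R \<and> \<bar>snd p\<bar> \<le> R"
proof -
  obtain R where R: "\<And>p. p \<in> P \<Longrightarrow> norm p \<le> R"
    using finite_imp_bounded[OF assms] unfolding bounded_iff by blast
  have "\<bar>fst p\<bar> \<le> R \<and> \<bar>snd p\<bar> \<le> R" if "p \<in> P" for p
    using norm_fst_le[of "fst p" "snd p"] norm_snd_le[of "snd p" "fst p"] R[OF that] by simp
  then show ?thesis by (rule that)
qed

lemma obeta_hull_lmeasurable:
  assumes "0 < \<beta>" "\<beta> < pi" and "finite P"
  shows "obeta_hull \<beta> P \<in> lmeasurable"
proof -
  obtain R where "\<And>p. p \<in> P \<Longrightarrow> \<bar>fst p\<bar> \<le> R \<and> \<bar>snd p\<bar> \<le> R"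
    using finite_imp_bounded_coords[OF assms(3)] by blast
  then have "bounded (obeta_hull \<beta> P)"
    using obeta_hull_subset_cbox[OF assms(1,2)] bounded_cbox bounded_subset by metis
  moreover have "closed (obeta_hull \<beta> P)"
    using sin_gt_zero[OF assms(1,2)] by (intro closed_obeta_hull) simp
  ultimately show ?thesis
    by (simp add: lmeasurable_compact compact_eq_bounded_closed)
qed

lemma bdd_above_area_obeta_hull:
  assumes "finite P"
  shows "bdd_above ((\<lambda>\<beta>. area (obeta_hull \<beta> P)) ` {0<..<pi})"
proof -
  obtain R where R: "\<And>p. p \<in> P \<Longrightarrow> \<bar>fst p\<bar> \<le> R \<and> \<bar>snd p\<bar> \<le> R"
    using finite_imp_bounded_coords[OF assms] by blast
  have "area (obeta_hull \<beta> P) \<le> measure lebesgue (cbox (-R, -R) (R, R))" if "\<beta> \<in> {0<..<pi}" for \<beta>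
    unfolding area_def using that obeta_hull_subset_cbox[OF _ _ R] obeta_hull_lmeasurable[OF _ _ assms]
    by (intro measure_mono_fmeasurable) auto
  then show ?thesis by (intro bdd_aboveI2) auto
qed

lemma area_obeta_hull_pos:
  assumes "0 < \<beta>" "\<beta> < pi" and "finite P" and "quadrants_occupied \<beta> P x"
  shows "area (obeta_hull \<beta> P) > 0"
proof -
  have sin: "sin \<beta> \<noteq> 0" using sin_gt_zero[OF assms(1,2)] by simp
  have "x \<in> {x. quadrants_occupied \<beta> P x}" using assms(4) by simp
  then obtain r where "r > 0" and "ball x r \<subseteq> {x. quadrants_occupied \<beta> P x}"
    using openE[OF open_quadrants_occupied[OF sin]] by blast
  then have "ball x r \<subseteq> obeta_hull \<beta> P"
    using quadrants_occupied_imp_mem_obeta_hull[OF sin] by blast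
  then have "measure lebesgue (ball x r) \<le> area (obeta_hull \<beta> P)"
    unfolding area_def using obeta_hull_lmeasurable[OF assms(1-3)]
    by (intro measure_mono_fmeasurable) auto
  moreover have "measure lebesgue (ball x r) > 0"
    using \<open>r > 0\<close> by (simp add: borel_open)
  ultimately show ?thesis by linarith
qed

lemma quadrants_occupied_if_off_lines:
  assumes sin: "sin \<beta> \<noteq> 0" and "finite P" and x: "x \<in> obeta_hull \<beta> P"
    and off: "\<And>p. p \<in> P \<Longrightarrow> obeta_s \<beta> p \<noteq> obeta_s \<beta> x \<and> obeta_t \<beta> p \<noteq> obeta_t \<beta> x"
  shows "quadrants_occupied \<beta> P x"
  unfolding quadrants_occupied_iff[OF sin]
proof (intro ballI, rule ccontr)
  fix e1 e2 :: real
  assume e: "e1 \<in> {1, -1}" "e2 \<in> {1, -1}"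
    and empty: "\<not> (\<exists>p\<in>P. e1 * (obeta_s \<beta> p - obeta_s \<beta> x) > 0 \<and> e2 * (obeta_t \<beta> p - obeta_t \<beta> x) > 0)"
  \<comment> \<open>d is below every nonzero coordinate gap, so moving the apex of the empty quadrant
      back by d along both axes puts x inside it while it stays P-free\<close>
  define D where "D = insert 1 ((\<lambda>p. \<bar>obeta_s \<beta> p - obeta_s \<beta> x\<bar>) ` P \<union> (\<lambda>p. \<bar>obeta_t \<beta> p - obeta_t \<beta> x\<bar>) ` P)"
  define d where "d = Min D"
  have "finite D" using \<open>finite P\<close> by (simp add: D_def)
  have "d > 0" unfolding d_def using \<open>finite D\<close> off by (auto simp: D_def Min_gr_iff)
  have d_le: "d \<le> \<bar>obeta_s \<beta> p - obeta_s \<beta> x\<bar>" "d \<le> \<bar>obeta_t \<beta> p - obeta_t \<beta> x\<bar>" if "p \<in> P" for p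
    unfolding d_def using \<open>finite D\<close> that by (auto simp: D_def intro!: Min_le)
  have sign: "e * v > 0" if "e \<in> {1, -1}" "e * v > - d" "d \<le> \<bar>v\<bar>" for e v :: real
    using that by (auto simp: abs_if split: if_splits)
  have "x \<notin> obeta_hull \<beta> P"
  proof (rule notin_obeta_hullI[OF sin e \<open>d > 0\<close>])
    fix p assume "p \<in> P"
    then show "\<not> (e1 * (obeta_s \<beta> p - obeta_s \<beta> x) > - d \<and> e2 * (obeta_t \<beta> p - obeta_t \<beta> x) > - d)"
      using sign[OF e(1)] sign[OF e(2)] d_le empty by blast
  qed
  with x show False by blast
qed

lemma negligible_obeta_s_line: "negligible {z. obeta_s \<beta> z = c}"
proof -
  have "{z. obeta_s \<beta> z = c} = {z. (1::real, - cos \<beta> / sin \<beta>) \<bullet> z = c}"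
    by (auto simp: obeta_s_def obeta_t_def inner_prod_def)
  then show ?thesis
    using negligible_hyperplane[of "(1::real, - cos \<beta> / sin \<beta>)" c] by (simp add: zero_prod_def)
qed

lemma negligible_obeta_t_line: "sin \<beta> \<noteq> 0 \<Longrightarrow> negligible {z. obeta_t \<beta> z = c}"
proof -
  assume "sin \<beta> \<noteq> 0"
  have "{z. obeta_t \<beta> z = c} = {z. (0, 1 / sin \<beta>) \<bullet> z = c}"
    by (auto simp: obeta_t_def inner_prod_def)
  with \<open>sin \<beta> \<noteq> 0\<close> show ?thesis
    using negligible_hyperplane[of "(0, 1 / sin \<beta>)" c] by (simp add: zero_prod_def)
qed

lemma negligible_obeta_hull:
  assumes sin: "sin \<beta> \<noteq> 0" and "finite P" and none: "\<And>x. \<not> quadrants_occupied \<beta> P x"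
  shows "negligible (obeta_hull \<beta> P)"
proof (rule negligible_subset)
  have "negligible ({z. obeta_s \<beta> z = obeta_s \<beta> p} \<union> {z. obeta_t \<beta> z = obeta_t \<beta> p})" for p
    using negligible_obeta_s_line negligible_obeta_t_line[OF sin] by (rule negligible_Un)
  then show "negligible (\<Union>p\<in>P. {z. obeta_s \<beta> z = obeta_s \<beta> p} \<union> {z. obeta_t \<beta> z = obeta_t \<beta> p})"
    using \<open>finite P\<close> by (intro negligible_Union) auto
  show "obeta_hull \<beta> P \<subseteq> (\<Union>p\<in>P. {z. obeta_s \<beta> z = obeta_s \<beta> p} \<union> {z. obeta_t \<beta> z = obeta_t \<beta> p})"
  proof
    fix x assume x: "x \<in> obeta_hull \<beta> P"
    show "x \<in> (\<Union>p\<in>P. {z. obeta_s \<beta> z = obeta_s \<beta> p} \<union> {z. obeta_t \<beta> z = obeta_t \<beta> p})"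
    proof (rule ccontr)
      assume "x \<notin> (\<Union>p\<in>P. {z. obeta_s \<beta> z = obeta_s \<beta> p} \<union> {z. obeta_t \<beta> z = obeta_t \<beta> p})"
      then have "\<And>p. p \<in> P \<Longrightarrow> obeta_s \<beta> p \<noteq> obeta_s \<beta> x \<and> obeta_t \<beta> p \<noteq> obeta_t \<beta> x"
        by auto
      with quadrants_occupied_if_off_lines[OF sin \<open>finite P\<close> x] none show False
        by blast
    qed
  qed
qed

lemma not_quadrants_occupied_two_pairs:
  assumes sin: "sin \<beta> \<noteq> 0" and tAB: "obeta_t \<beta> A = obeta_t \<beta> B" and suv: "obeta_s \<beta> u = obeta_s \<beta> v"
  shows "\<not> quadrants_occupied \<beta> {A, B, u, v} x"
proof
  assume "quadrants_occupied \<beta> {A, B, u, v} x"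
  then have occ: "\<forall>e1\<in>{1, -1}. \<forall>e2\<in>{1, -1}. \<exists>p\<in>{A, B, u, v}.
      e1 * (obeta_s \<beta> p - obeta_s \<beta> x) > 0 \<and> e2 * (obeta_t \<beta> p - obeta_t \<beta> x) > 0"
    by (simp only: quadrants_occupied_iff[OF sin])
  define e2 :: real where "e2 = (if obeta_t \<beta> A > obeta_t \<beta> x then -1 else 1)"
  have e2: "e2 \<in> {1, -1}" and A_outside: "\<not> e2 * (obeta_t \<beta> A - obeta_t \<beta> x) > 0"
    by (auto simp: e2_def)
  have "\<exists>p\<in>{A, B, u, v}. 1 * (obeta_s \<beta> p - obeta_s \<beta> x) > 0 \<and> e2 * (obeta_t \<beta> p - obeta_t \<beta> x) > 0"
    and "\<exists>p\<in>{A, B, u, v}. -1 * (obeta_s \<beta> p - obeta_s \<beta> x) > 0 \<and> e2 * (obeta_t \<beta> p - obeta_t \<beta> x) > 0"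
    using occ e2 by blast+
  with A_outside tAB suv show False by auto
qed

lemma area_obeta_hull_two_pairs:
  assumes "sin \<beta> \<noteq> 0" and "obeta_t \<beta> A = obeta_t \<beta> B" and "obeta_s \<beta> u = obeta_s \<beta> v"
  shows "area (obeta_hull \<beta> {A, B, u, v}) = 0"
  unfolding area_def
  by (intro negligible_imp_measure0 negligible_obeta_hull[OF assms(1)] not_quadrants_occupied_two_pairs[OF assms]) simp

lemma quadrants_occupied_other_angle:
  assumes "0 < \<beta>\<^sub>0" "\<beta>\<^sub>0 < pi"
  shows "\<exists>\<beta>\<in>{0<..<pi}. \<exists>x. quadrants_occupied \<beta>
           {(1, 3/2), (-1, 3/2), (cos \<beta>\<^sub>0, sin \<beta>\<^sub>0), (- cos \<beta>\<^sub>0, - sin \<beta>\<^sub>0)} x"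
  \<comment> \<open>At \<beta> = pi/2 the point (0, 5/4) has (1, 3/2), (-1, 3/2) above it and \<plusminus>u below it on
      opposite sides; if u is vertical, take \<beta> = pi/4 and the point (1/2, 5/4) instead.\<close>
proof (cases "cos \<beta>\<^sub>0 = 0")
  case False
  have "sin (pi / 2) > 0" "obeta_s (pi / 2) z = fst z" for z
    by (simp_all add: obeta_s_def obeta_t_def)
  moreover have "sin \<beta>\<^sub>0 < 5/4" "sin \<beta>\<^sub>0 > 0"
    using sin_le_one[of \<beta>\<^sub>0] sin_gt_zero[OF assms] by linarith+
  ultimately have "quadrants_occupied (pi / 2)
      {(1, 3/2), (-1, 3/2), (cos \<beta>\<^sub>0, sin \<beta>\<^sub>0), (- cos \<beta>\<^sub>0, - sin \<beta>\<^sub>0)} (0, 5/4)"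
    using False by (cases "cos \<beta>\<^sub>0 > 0") (auto simp: quadrants_occupied_iff_snd)
  then show ?thesis by force
next
  case True
  then have "sin \<beta>\<^sub>0 = 1"
    using sin_cos_squared_add[of \<beta>\<^sub>0] sin_gt_zero[OF assms] by (simp add: power2_eq_1_iff)
  moreover have "sin (pi / 4) > 0" "obeta_s (pi / 4) z = fst z - snd z" for z
    by (simp_all add: obeta_s_def obeta_t_def sin_45 cos_45)
  ultimately have "quadrants_occupied (pi / 4)
      {(1, 3/2), (-1, 3/2), (cos \<beta>\<^sub>0, sin \<beta>\<^sub>0), (- cos \<beta>\<^sub>0, - sin \<beta>\<^sub>0)} (1/2, 5/4)"
    using True by (auto simp: quadrants_occupied_iff_snd)
  then show ?thesis by force
qed

theorem lemma4:
  fixes \<beta>\<^sub>0 :: real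
  assumes "0 < \<beta>\<^sub>0" and "\<beta>\<^sub>0 < pi"
  shows "\<exists>P :: (real \<times> real) set. finite P \<and>
           (SUP \<beta>\<in>{0<..<pi}. area (obeta_hull \<beta> P)) \<noteq> area (obeta_hull \<beta>\<^sub>0 P)"
proof -
  define P :: "(real \<times> real) set"
    where "P = {(1, 3/2), (-1, 3/2), (cos \<beta>\<^sub>0, sin \<beta>\<^sub>0), (- cos \<beta>\<^sub>0, - sin \<beta>\<^sub>0)}"
  have "finite P" by (simp add: P_def)
  have "sin \<beta>\<^sub>0 \<noteq> 0" using sin_gt_zero[OF assms] by simp
  then have "area (obeta_hull \<beta>\<^sub>0 P) = 0"
    unfolding P_def by (rule area_obeta_hull_two_pairs) (simp_all add: obeta_s_def obeta_t_def \<open>sin \<beta>\<^sub>0 \<noteq> 0\<close>)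
  obtain \<beta> x where \<beta>: "\<beta> \<in> {0<..<pi}" and "quadrants_occupied \<beta> P x"
    using quadrants_occupied_other_angle[OF assms] unfolding P_def by blast
  then have "0 < area (obeta_hull \<beta> P)"
    using \<open>finite P\<close> by (intro area_obeta_hull_pos) auto
  also have "\<dots> \<le> (SUP \<beta>\<in>{0<..<pi}. area (obeta_hull \<beta> P))"
    using \<beta> bdd_above_area_obeta_hull[OF \<open>finite P\<close>] by (rule cSUP_upper)
  finally show ?thesis
    using \<open>finite P\<close> \<open>area (obeta_hull \<beta>\<^sub>0 P) = 0\<close> by auto
qed

end
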